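(* Let $H_1,H_2$ be $r\times n$ matrices of rank $r$ over $\mathbb{F}_q$. Let $m$ be the number of pairs $(U,P)$ with $U\in\mathrm{GL}_r(\mathbb{F}_q)$ and $P$ an $n\times n$ permutation matrix such that $UH_2=H_1P$, let $m_u$ be the number of distinct $U$ occurring in such pairs and $m_p$ the number of distinct $P$ occurring in such pairs. Then for a fixed $U$ with $(U,P_1)$ such a pair, $(U,P_2)$ is also such a pair if and only if $P_2$ lies in the same right coset of $\mathrm{Sym}(H_1)$ as $P_1$. Consequently $m_p=m=m_u\,|\mathrm{Sym}(H_1)|$.
   Context: $\mathrm{Sym}(H_1)=\{P\in S_n: H_1P=H_1\}$ is the subgroup of permutation matrices leaving $H_1$ unchanged under column permutation. *)

theory Defs
  imports "Jordan_Normal_Form.DL_Rank" "HOL-Combinatorics.Permutations"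
begin

definition perm_mat :: "nat \<Rightarrow> (nat \<Rightarrow> nat) \<Rightarrow> 'a::field mat" where
  "perm_mat n p = mat n n (\<lambda>(i,j). if i = p j then 1 else 0)"

definition perm_mats :: "nat \<Rightarrow> 'a::field mat set" where
  "perm_mats n = {perm_mat n p | p. p permutes {..<n}}"

definition GL :: "nat \<Rightarrow> 'a::field mat set" where
  "GL r = {U \<in> carrier_mat r r. invertible_mat U}"

definition Sym :: "nat \<Rightarrow> 'a::field mat \<Rightarrow> 'a mat set" where
  "Sym n H = {P \<in> perm_mats n. H * P = H}"

definition equiv_pairs :: "nat \<Rightarrow> nat \<Rightarrow> 'a::field mat \<Rightarrow> 'a mat \<Rightarrow> ('a mat \<times> 'a mat) set" where
  "equiv_pairs r n H1 H2 = {(U,P). U \<in> GL r \<and> P \<in> perm_mats n \<and> U * H2 = H1 * P}"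

end

theory Submission
  imports Defs
begin

text \<open>Since \<open>H\<^sub>2\<close> has full row rank, \<open>r\<close> of its columns form an invertible matrix \<open>A\<close>;
  hence \<open>U H\<^sub>2 = U' H\<^sub>2\<close> gives \<open>U A = U' A\<close> and so \<open>U = U'\<close>. A pair is therefore determined
  by its permutation matrix, i.e. \<open>m\<^sub>p = m\<close>. For fixed \<open>U\<close>, the admissible \<open>P\<close> are those
  with \<open>H\<^sub>1 P = H\<^sub>1 P\<^sub>1\<close>, i.e. with \<open>P P\<^sub>1\<^sup>-\<^sup>1 \<in> Sym(H\<^sub>1)\<close>; so every fibre of
  \<open>(U, P) \<mapsto> U\<close> is a right coset of \<open>Sym(H\<^sub>1)\<close>, and counting fibres gives
  \<open>m = m\<^sub>u |Sym(H\<^sub>1)|\<close>.\<close>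

lemma perm_mat_carrier [simp]: "perm_mat n p \<in> carrier_mat n n"
  unfolding perm_mat_def by simp

lemma perm_mat_mult:
  assumes q: "q permutes {..<n}"
  shows "(perm_mat n p :: 'a::field mat) * perm_mat n q = perm_mat n (p \<circ> q)"
proof (rule eq_matI)
  fix i j assume "i < dim_row (perm_mat n (p \<circ> q) :: 'a mat)" "j < dim_col (perm_mat n (p \<circ> q) :: 'a mat)"
  then have i: "i < n" and j: "j < n" unfolding perm_mat_def by auto
  have qj: "q j < n" using permutes_in_image[OF q] j by simp
  have "((perm_mat n p :: 'a mat) * perm_mat n q) $$ (i, j)
      = (\<Sum>k\<in>{0..<n}. (if i = p k then 1 else 0) * (if k = q j then 1 else (0::'a)))"
    using i j unfolding perm_mat_def by (simp add: scalar_prod_def)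
  also have "\<dots> = (\<Sum>k\<in>{0..<n}. if k = q j then (if i = p k then 1 else 0) else (0::'a))"
    by (rule sum.cong) auto
  also have "\<dots> = perm_mat n (p \<circ> q) $$ (i, j)"
    using i j qj unfolding perm_mat_def by simp
  finally show "((perm_mat n p :: 'a mat) * perm_mat n q) $$ (i, j) = perm_mat n (p \<circ> q) $$ (i, j)" .
qed (auto simp: perm_mat_def)

lemma perm_mat_id: "perm_mat n id = (1\<^sub>m n :: 'a::field mat)"
  unfolding perm_mat_def by (rule eq_matI) auto

lemma perm_matsE:
  assumes "P \<in> perm_mats n"
  obtains p where "p permutes {..<n}" "P = perm_mat n p"
  using assms unfolding perm_mats_def by auto

lemma perm_mats_carrier: "P \<in> perm_mats n \<Longrightarrow> P \<in> carrier_mat n n"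
  by (auto elim: perm_matsE)

lemma finite_perm_mats: "finite (perm_mats n :: 'a::field mat set)"
proof -
  have "perm_mats n = (perm_mat n :: _ \<Rightarrow> 'a mat) ` {p. p permutes {..<n}}"
    unfolding perm_mats_def by auto
  then show ?thesis using finite_permutations[of "{..<n}"] by simp
qed

lemma perm_mats_mult_closed:
  assumes "P \<in> perm_mats n" and "Q \<in> perm_mats n"
  shows "P * Q \<in> perm_mats n"
proof -
  obtain p q where "p permutes {..<n}" "P = perm_mat n p" "q permutes {..<n}" "Q = perm_mat n q"
    using assms by (meson perm_matsE)
  then show ?thesis
    unfolding perm_mats_def by (auto simp: perm_mat_mult intro: permutes_compose)
qed

lemma perm_mats_inverse:
  assumes "(P :: 'a::field mat) \<in> perm_mats n"
  obtains Q where "Q \<in> perm_mats n" "P * Q = 1\<^sub>m n" "Q * P = 1\<^sub>m n"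
proof -
  obtain p where p: "p permutes {..<n}" "P = perm_mat n p"
    using assms by (rule perm_matsE)
  let ?Q = "perm_mat n (inv_into UNIV p) :: 'a mat"
  have "?Q \<in> perm_mats n"
    unfolding perm_mats_def using permutes_inv[OF p(1)] by blast
  moreover have "P * ?Q = 1\<^sub>m n"
    using p by (simp add: perm_mat_mult permutes_inv permutes_inv_o perm_mat_id)
  moreover have "?Q * P = 1\<^sub>m n"
    using p by (simp add: perm_mat_mult permutes_inv_o perm_mat_id)
  ultimately show ?thesis by (rule that)
qed

lemma perm_mats_mult_right_inj:
  assumes "P \<in> perm_mats n"
  shows "inj_on (\<lambda>S. S * P) (carrier_mat n n)"
proof (rule inj_onI)
  fix S T :: "'a mat"
  assume S: "S \<in> carrier_mat n n" and T: "T \<in> carrier_mat n n" and eq: "S * P = T * P"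
  obtain Q where Q: "Q \<in> perm_mats n" "P * Q = 1\<^sub>m n"
    using assms by (rule perm_mats_inverse)
  have P: "P \<in> carrier_mat n n" and Qc: "Q \<in> carrier_mat n n"
    using assms Q(1) by (auto intro: perm_mats_carrier)
  have "S = (S * P) * Q" using S P Qc Q(2) by (simp add: assoc_mult_mat[of _ n n _ n _ n])
  also have "\<dots> = (T * P) * Q" by (simp add: eq)
  also have "\<dots> = T" using T P Qc Q(2) by (simp add: assoc_mult_mat[of _ n n _ n _ n])
  finally show "S = T" .
qed

lemma Sym_subset_carrier: "Sym n H \<subseteq> carrier_mat n n"
  unfolding Sym_def by (auto intro: perm_mats_carrier)

lemma mult_perm_mats_eq_iff_Sym_coset:
  assumes H: "H \<in> carrier_mat r n" and P1: "P1 \<in> perm_mats n"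
  shows "P2 \<in> perm_mats n \<and> H * P2 = H * P1 \<longleftrightarrow> P2 \<in> {S * P1 | S. S \<in> Sym n H}"
proof
  assume P2: "P2 \<in> perm_mats n \<and> H * P2 = H * P1"
  obtain Q where Q: "Q \<in> perm_mats n" "P1 * Q = 1\<^sub>m n" "Q * P1 = 1\<^sub>m n"
    using P1 by (rule perm_mats_inverse)
  have carr: "P1 \<in> carrier_mat n n" "P2 \<in> carrier_mat n n" "Q \<in> carrier_mat n n"
    using P1 P2 Q(1) by (auto intro: perm_mats_carrier)
  have "H * (P2 * Q) = (H * P2) * Q"
    using H carr by (simp add: assoc_mult_mat[of _ r n _ n _ n])
  also have "\<dots> = H * (P1 * Q)"
    using H carr P2 by (simp add: assoc_mult_mat[of _ r n _ n _ n])
  also have "\<dots> = H" using H Q(2) by simp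
  finally have "P2 * Q \<in> Sym n H"
    unfolding Sym_def using P2 Q(1) by (simp add: perm_mats_mult_closed)
  moreover have "(P2 * Q) * P1 = P2"
    using carr Q(3) by (simp add: assoc_mult_mat[of _ n n _ n _ n])
  ultimately show "P2 \<in> {S * P1 | S. S \<in> Sym n H}" by (auto intro!: exI[of _ "P2 * Q"])
next
  assume "P2 \<in> {S * P1 | S. S \<in> Sym n H}"
  then obtain S where S: "S \<in> perm_mats n" "H * S = H" and P2: "P2 = S * P1"
    unfolding Sym_def by blast
  have "H * (S * P1) = H * P1"
    using H S P1 by (simp add: perm_mats_carrier assoc_mult_mat[of _ r n _ n _ n, symmetric])
  then show "P2 \<in> perm_mats n \<and> H * P2 = H * P1"
    using S(1) P1 P2 by (simp add: perm_mats_mult_closed)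
qed

lemma card_Sym_coset:
  assumes "P \<in> perm_mats n"
  shows "card {S * P | S. S \<in> Sym n H} = card (Sym n H)"
proof -
  have "{S * P | S. S \<in> Sym n H} = (\<lambda>S. S * P) ` Sym n H" by blast
  moreover have "inj_on (\<lambda>S. S * P) (Sym n H)"
    using perm_mats_mult_right_inj[OF assms] Sym_subset_carrier by (rule inj_on_subset)
  ultimately show ?thesis by (simp add: card_image)
qed

lemma full_row_rank_square_submatrix:
  fixes H :: "'a::field mat"
  assumes H: "H \<in> carrier_mat r n" and rank: "vec_space.rank r H = r"
  obtains A where "A \<in> carrier_mat r r" "det A \<noteq> 0" "set (cols A) \<subseteq> set (cols H)"
proof -
  interpret vec_space "TYPE('a)" r .
  obtain S where max: "maximal S (\<lambda>T. T \<subseteq> set (cols H) \<and> lin_indpt T)" and "finite S"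
    using maximal_exists_superset[of "set (cols H)" "\<lambda>T. T \<subseteq> set (cols H) \<and> lin_indpt T" "{}"]
    by (auto simp: lin_dep_def)
  then obtain xs where xs: "set xs = S" "distinct xs"
    using finite_distinct_list by blast
  have S: "S \<subseteq> set (cols H)" "lin_indpt S"
    using max unfolding maximal_def by auto
  have "card S = r"
    using rank_card_indpt[OF H max] rank by simp
  then have len: "length xs = r"
    using distinct_card[OF xs(2)] xs(1) by simp
  have "set xs \<subseteq> carrier_vec r"
    using xs(1) S(1) cols_dim[of H] H by auto
  then have cols: "cols (mat_of_cols r xs) = xs"
    by (rule cols_mat_of_cols)
  have A: "mat_of_cols r xs \<in> carrier_mat r r"
    using mat_of_cols_carrier(1)[of r xs] len by simp
  have "rank (mat_of_cols r xs) = r"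
    using lin_indpt_full_rank[OF A] cols xs S(2) by simp
  then have "det (mat_of_cols r xs) \<noteq> 0"
    using det_rank_iff[OF A] by simp
  then show ?thesis
    using that[OF A] cols xs(1) S(1) by simp
qed

lemma full_row_rank_right_cancel:
  fixes H :: "'a::field mat"
  assumes H: "H \<in> carrier_mat r n" and rank: "vec_space.rank r H = r"
    and U: "U \<in> carrier_mat r r" and U': "U' \<in> carrier_mat r r"
    and eq: "U * H = U' * H"
  shows "U = U'"
proof -
  obtain A where A: "A \<in> carrier_mat r r" "det A \<noteq> 0" "set (cols A) \<subseteq> set (cols H)"
    using H rank by (rule full_row_rank_square_submatrix)
  have UA: "U * A = U' * A"
  proof (rule mat_col_eqI)
    fix j assume "j < dim_col (U' * A)"
    then have j: "j < r" using A(1) by simp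
    have "col A j \<in> set (cols H)"
      using j A by (metis cols_length cols_nth nth_mem carrier_matD(2) subsetD)
    then obtain k where k: "k < n" "col A j = col H k"
      using H by (metis cols_length cols_nth in_set_conv_nth carrier_matD(2))
    have "col (U * A) j = col (U * H) k"
      using col_mult2[OF U A(1) j] col_mult2[OF U H k(1)] k(2) by simp
    also have "\<dots> = col (U' * A) j"
      using col_mult2[OF U' A(1) j] col_mult2[OF U' H k(1)] k(2) eq by simp
    finally show "col (U * A) j = col (U' * A) j" .
  qed (use U U' A in auto)
  obtain B where B: "B \<in> carrier_mat r r" "A * B = 1\<^sub>m r"
    using det_non_zero_imp_unit[OF A(1,2), of undefined] unfolding Units_def ring_mat_def by auto
  have "U = (U * A) * B" using U A(1) B by (simp add: assoc_mult_mat[of _ r r _ r _ r])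
  also have "\<dots> = U'" using U' A(1) B by (simp add: UA assoc_mult_mat[of _ r r _ r _ r])
  finally show ?thesis .
qed

lemma card_eq_card_fst_image_mult:
  assumes "finite E" and "\<And>x. x \<in> fst ` E \<Longrightarrow> card {y. (x, y) \<in> E} = k"
  shows "card E = card (fst ` E) * k"
proof -
  have fibers_finite: "finite {y. (x, y) \<in> E}" for x
    using finite_imageI[OF assms(1), of snd] by (rule rev_finite_subset) force
  have "E = Sigma (fst ` E) (\<lambda>x. {y. (x, y) \<in> E})" by force
  then have "card E = (\<Sum>x\<in>fst ` E. card {y. (x, y) \<in> E})"
    using card_SigmaI[of "fst ` E" "\<lambda>x. {y. (x, y) \<in> E}"] assms(1) fibers_finite by simp
  then show ?thesis using assms(2) by simp
qed

lemma equiv_pairs_fiber: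
  assumes "H1 \<in> carrier_mat r n" and "(U, P1) \<in> equiv_pairs r n H1 H2"
  shows "{P. (U, P) \<in> equiv_pairs r n H1 H2} = {S * P1 | S. S \<in> Sym n H1}"
proof -
  from assms(2) have P1: "P1 \<in> perm_mats n" and UH2: "U * H2 = H1 * P1"
    unfolding equiv_pairs_def by auto
  have "(U, P) \<in> equiv_pairs r n H1 H2 \<longleftrightarrow> P \<in> perm_mats n \<and> H1 * P = H1 * P1" for P
    using assms(2) UH2 unfolding equiv_pairs_def by auto
  then show ?thesis
    using mult_perm_mats_eq_iff_Sym_coset[OF assms(1) P1] by blast
qed

lemma inj_on_snd_equiv_pairs:
  assumes "H2 \<in> carrier_mat r n" and "vec_space.rank r H2 = r"
  shows "inj_on snd (equiv_pairs r n H1 H2)"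
  using full_row_rank_right_cancel[OF assms]
  by (auto intro!: inj_onI simp: equiv_pairs_def GL_def)

lemma finite_equiv_pairs:
  assumes "H2 \<in> carrier_mat r n" and "vec_space.rank r H2 = r"
  shows "finite (equiv_pairs r n H1 H2)"
proof -
  have "snd ` equiv_pairs r n H1 H2 \<subseteq> perm_mats n"
    unfolding equiv_pairs_def by auto
  then have "finite (snd ` equiv_pairs r n H1 H2)"
    using finite_perm_mats by (rule finite_subset)
  then show ?thesis
    using finite_image_iff[OF inj_on_snd_equiv_pairs[OF assms]] by simp
qed

theorem lemma2:
  fixes H1 H2 :: "'a::{field,finite} mat" and r n :: nat
  assumes "H1 \<in> carrier_mat r n" and "H2 \<in> carrier_mat r n"
    and "vec_space.rank r H1 = r" and "vec_space.rank r H2 = r"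
  shows "(\<forall>U P1 P2. (U, P1) \<in> equiv_pairs r n H1 H2 \<longrightarrow>
            ((U, P2) \<in> equiv_pairs r n H1 H2 \<longleftrightarrow> P2 \<in> {S * P1 | S. S \<in> Sym n H1}))
       \<and> card (snd ` equiv_pairs r n H1 H2) = card (equiv_pairs r n H1 H2)
       \<and> card (equiv_pairs r n H1 H2) = card (fst ` equiv_pairs r n H1 H2) * card (Sym n H1)"
proof -
  let ?E = "equiv_pairs r n H1 H2"
  have fiber: "{P. (U, P) \<in> ?E} = {S * P1 | S. S \<in> Sym n H1}" if "(U, P1) \<in> ?E" for U P1
    using equiv_pairs_fiber[OF assms(1) that] .
  have "card {P. (U, P) \<in> ?E} = card (Sym n H1)" if U: "U \<in> fst ` ?E" for U
  proof -
    obtain P1 where "(U, P1) \<in> ?E" using U by force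
    moreover from this have "P1 \<in> perm_mats n" unfolding equiv_pairs_def by simp
    ultimately show ?thesis by (simp add: fiber card_Sym_coset)
  qed
  then have "card ?E = card (fst ` ?E) * card (Sym n H1)"
    using finite_equiv_pairs[OF assms(2,4)] by (rule card_eq_card_fst_image_mult[rotated])
  moreover have "card (snd ` ?E) = card ?E"
    using inj_on_snd_equiv_pairs[OF assms(2,4)] by (rule card_image)
  ultimately show ?thesis using fiber by blast
qed

end
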